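(* Let $T\in\mathcal B(\mathcal H)$. The function $\Psi_T^{-1}(z)=\|(T-z)^{-1}\|$ is semiconvex on the open set $\mathbb C\setminus\sigma(T)$ with bound function $C(z)=2\Psi_T(z)^{-3}$. That is, for every compact convex set $B\subset\mathbb C\setminus\sigma(T)$, setting $C'=\max_{z\in B}2\Psi_T(z)^{-3}$, one has $$2\Psi_T^{-1}(\mu)-\Psi_T^{-1}(\mu+\eta)-\Psi_T^{-1}(\mu-\eta)\le C'|\eta|^2$$ for all $\mu,\eta\in\mathbb C$ with $[\mu-\eta,\mu+\eta]\subset B$.
   Context: $\mathcal H$ is a complex Hilbert space. $\Psi_T(z)=\|(T-z)^{-1}\|^{-1}$ for $z\notin\sigma(T)$. Definition: for $A\subset\mathbb R^n$ and continuous $u:A\to\mathbb R$, $u$ is semiconvex with constant $C\ge0$ if $2u(\mu)-u(\mu+\eta)-u(\mu-\eta)\le C|\eta|^2$ whenever the segment $[\mu-\eta,\mu+\eta]\subset A$; for an open set $A$ and positive continuous $C:A\to\mathbb R$, $u$ is semiconvex with bound function $C(x)$ if for every compact convex $B\subset A$ the restriction $u|_B$ is semiconvex with constant $\max_{x\in B}C(x)$. Here $\mathbb C$ is identified with $\mathbb R^2$. *)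

theory Defs
  imports "HOL-Analysis.Analysis"
begin

text \<open>A complex Hilbert space is modelled as a real Hilbert space 'a (real_inner, complete)
together with a complex structure J (multiplication by i): J is real-linear, J (J x) = - x,
and J is orthogonal.\<close>

definition complex_structure :: "('a::real_inner \<Rightarrow> 'a) \<Rightarrow> bool" where
  "complex_structure J \<longleftrightarrow> linear J \<and> (\<forall>x. J (J x) = - x) \<and> (\<forall>x y. inner (J x) (J y) = inner x y)"

definition cscale :: "('a::real_vector \<Rightarrow> 'a) \<Rightarrow> complex \<Rightarrow> 'a \<Rightarrow> 'a" where
  "cscale J z x = Re z *\<^sub>R x + Im z *\<^sub>R J x"

text \<open>Bounded complex-linear operators, i.e. elements of B(H).\<close>
definition cbounded :: "('a::real_normed_vector \<Rightarrow> 'a) \<Rightarrow> ('a \<Rightarrow> 'a) \<Rightarrow> bool" where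
  "cbounded J T \<longleftrightarrow> bounded_linear T \<and> (\<forall>x. T (J x) = J (T x))"

definition shift_op :: "('a::real_normed_vector \<Rightarrow> 'a) \<Rightarrow> ('a \<Rightarrow> 'a) \<Rightarrow> complex \<Rightarrow> 'a \<Rightarrow> 'a" where
  "shift_op J T z = (\<lambda>x. T x - cscale J z x)"

definition spec :: "('a::real_normed_vector \<Rightarrow> 'a) \<Rightarrow> ('a \<Rightarrow> 'a) \<Rightarrow> complex set" where
  "spec J T = {z. \<not> (\<exists>S. cbounded J S \<and> S \<circ> shift_op J T z = id \<and> shift_op J T z \<circ> S = id)}"

definition res_norm :: "('a::real_normed_vector \<Rightarrow> 'a) \<Rightarrow> ('a \<Rightarrow> 'a) \<Rightarrow> complex \<Rightarrow> real" where
  "res_norm J T z = onorm (inv (shift_op J T z))"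

definition Psi :: "('a::real_normed_vector \<Rightarrow> 'a) \<Rightarrow> ('a \<Rightarrow> 'a) \<Rightarrow> complex \<Rightarrow> real" where
  "Psi J T z = inverse (res_norm J T z)"

definition semiconvex_const :: "complex set \<Rightarrow> (complex \<Rightarrow> real) \<Rightarrow> real \<Rightarrow> bool" where
  "semiconvex_const A u C \<longleftrightarrow>
     (\<forall>\<mu> \<eta>. closed_segment (\<mu> - \<eta>) (\<mu> + \<eta>) \<subseteq> A \<longrightarrow>
        2 * u \<mu> - u (\<mu> + \<eta>) - u (\<mu> - \<eta>) \<le> C * (cmod \<eta>)\<^sup>2)"

definition semiconvex_bound :: "complex set \<Rightarrow> (complex \<Rightarrow> real) \<Rightarrow> (complex \<Rightarrow> real) \<Rightarrow> bool" where
  "semiconvex_bound A u Cf \<longleftrightarrow> continuous_on A u \<and>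
     (\<forall>B. compact B \<and> convex B \<and> B \<subseteq> A \<longrightarrow> semiconvex_const B u (Sup (Cf ` B)))"

end

theory Submission
  imports Defs
begin

text \<open>Write R(z) = (T - z)\<inverse>. Applying the resolvent identity R(w) - R(z) = (w - z) R(w) R(z)
three times gives
  R(\<mu> + \<eta>) + R(\<mu> - \<eta>) - 2 R(\<mu>) = 2 \<eta>^2 R(\<mu> + \<eta>) R(\<mu> - \<eta>) R(\<mu>),
so the second difference of \<parallel>R\<parallel> at \<mu> is at most 2 |\<eta>|^2 times the product of three resolvent
norms at points of B, each of whose cubes is at most the maximum over z in B of \<parallel>R(z)\<parallel>^3 = \<Psi>(z)^-3. Continuity of
\<parallel>R\<parallel> follows from the same identity.\<close>

lemma complex_structureD:
  assumes "complex_structure J"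
  shows "linear J" "J (J x) = - x" "inner (J x) (J y) = inner x y"
  using assms unfolding complex_structure_def by auto

lemma cscale_diff_left: "cscale J (a - b) x = cscale J a x - cscale J b x"
  by (simp add: cscale_def algebra_simps)

lemma cscale_minus_left: "cscale J (- a) x = - cscale J a x"
  by (simp add: cscale_def)

lemma cscale_diff_right:
  assumes "linear J"
  shows "cscale J c (x - y) = cscale J c x - cscale J c y"
  by (simp add: cscale_def linear_diff[OF assms] scaleR_diff_right)

lemma cscale_cscale:
  assumes "complex_structure J"
  shows "cscale J a (cscale J b x) = cscale J (a * b) x"
proof -
  interpret J: linear J using complex_structureD(1)[OF assms] .
  show ?thesis
    by (simp add: cscale_def J.add J.scale complex_structureD(2)[OF assms] algebra_simps)
qed

lemma linear_commute_cscale: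
  assumes "linear S" "\<And>x. S (J x) = J (S x)"
  shows "S (cscale J c x) = cscale J c (S x)"
proof -
  interpret S: linear S using assms(1) .
  show ?thesis by (simp add: cscale_def S.add S.scale assms(2))
qed

lemma inner_complex_structure_self:
  assumes "complex_structure J"
  shows "inner x (J x) = 0"
proof -
  have "inner x (J x) = inner (J x) (J (J x))" using complex_structureD(3)[OF assms] by simp
  also have "\<dots> = - inner x (J x)"
    using complex_structureD(2)[OF assms] by (simp add: inner_commute)
  finally show ?thesis by simp
qed

lemma norm_cscale:
  assumes "complex_structure J"
  shows "norm (cscale J c x) = cmod c * norm x"
proof -
  have "(norm (cscale J c x))\<^sup>2 = ((Re c)\<^sup>2 + (Im c)\<^sup>2) * (norm x)\<^sup>2"
    unfolding cscale_def power2_norm_eq_inner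
    using complex_structureD(3)[OF assms, of x x] inner_complex_structure_self[OF assms, of x]
    by (simp add: inner_add_left inner_add_right inner_commute power2_eq_square algebra_simps)
  also have "\<dots> = (cmod c * norm x)\<^sup>2"
    by (simp add: cmod_def power_mult_distrib)
  finally show ?thesis
    by (simp add: power2_eq_imp_eq)
qed

lemma linear_shift_op:
  assumes "cbounded J T" "linear J"
  shows "linear (shift_op J T z)"
proof -
  interpret T: linear T using assms(1) by (simp add: cbounded_def bounded_linear.linear)
  interpret J: linear J using assms(2) .
  show ?thesis
    by (rule linearI) (simp_all add: shift_op_def cscale_def T.add T.scale J.add J.scale algebra_simps)
qed

lemma shift_op_cscale:
  assumes "cbounded J T" "complex_structure J"
  shows "shift_op J T w (cscale J c x) = cscale J c (shift_op J T w x)"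
proof -
  have "T (cscale J c x) = cscale J c (T x)"
    using assms(1) by (intro linear_commute_cscale) (auto simp: cbounded_def bounded_linear.linear)
  then show ?thesis
    by (simp add: shift_op_def cscale_cscale[OF assms(2)] mult.commute
        cscale_diff_right[OF complex_structureD(1)[OF assms(2)]])
qed

definition resolvent :: "('a::real_normed_vector \<Rightarrow> 'a) \<Rightarrow> ('a \<Rightarrow> 'a) \<Rightarrow> complex \<Rightarrow> 'a \<Rightarrow> 'a" where
  "resolvent J T z = inv (shift_op J T z)"

lemma res_norm_eq_onorm_resolvent: "res_norm J T z = onorm (resolvent J T z)"
  by (simp add: res_norm_def resolvent_def)

lemma resolvent_inverse:
  assumes "z \<notin> spec J T"
  shows "cbounded J (resolvent J T z)"
    and "resolvent J T z (shift_op J T z x) = x"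
    and "shift_op J T z (resolvent J T z x) = x"
proof -
  obtain S where S: "cbounded J S" "S \<circ> shift_op J T z = id" "shift_op J T z \<circ> S = id"
    using assms unfolding spec_def by auto
  have R: "resolvent J T z = S"
    unfolding resolvent_def by (rule inv_unique_comp) (use S in auto)
  show "cbounded J (resolvent J T z)"
    using S(1) R by simp
  show "resolvent J T z (shift_op J T z x) = x" "shift_op J T z (resolvent J T z x) = x"
    using S(2,3) R by (simp_all add: pointfree_idE)
qed

lemma bounded_linear_resolvent:
  assumes "z \<notin> spec J T"
  shows "bounded_linear (resolvent J T z)"
  using resolvent_inverse(1)[OF assms] by (simp add: cbounded_def)

lemma norm_resolvent_le:
  assumes "z \<notin> spec J T"
  shows "norm (resolvent J T z x) \<le> res_norm J T z * norm x"
  unfolding res_norm_eq_onorm_resolvent using onorm[OF bounded_linear_resolvent[OF assms]] .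

lemma res_norm_nonneg:
  assumes "z \<notin> spec J T"
  shows "0 \<le> res_norm J T z"
  unfolding res_norm_eq_onorm_resolvent using onorm_pos_le[OF bounded_linear_resolvent[OF assms]] .

lemma norm_resolvent_resolvent_le:
  assumes "z \<notin> spec J T" "w \<notin> spec J T"
  shows "norm (resolvent J T w (resolvent J T z x)) \<le> res_norm J T w * res_norm J T z * norm x"
proof -
  have "norm (resolvent J T w (resolvent J T z x)) \<le> res_norm J T w * norm (resolvent J T z x)"
    by (rule norm_resolvent_le[OF assms(2)])
  also have "\<dots> \<le> res_norm J T w * (res_norm J T z * norm x)"
    by (intro mult_left_mono norm_resolvent_le[OF assms(1)] res_norm_nonneg[OF assms(2)])
  finally show ?thesis by (simp add: mult.assoc)
qed

lemma resolvent_identity: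
  assumes "cbounded J T" "complex_structure J" "z \<notin> spec J T" "w \<notin> spec J T"
  shows "resolvent J T w x - resolvent J T z x
       = cscale J (w - z) (resolvent J T w (resolvent J T z x))"
proof -
  let ?L = "shift_op J T w" and ?Rw = "resolvent J T w" and ?Rz = "resolvent J T z"
  interpret L: linear ?L using linear_shift_op assms(1) complex_structureD(1)[OF assms(2)] .
  have "?L v = shift_op J T z v - cscale J (w - z) v" for v
    by (simp add: shift_op_def cscale_diff_left)
  then have "?L (?Rz x) = x - cscale J (w - z) (?Rz x)"
    by (simp add: resolvent_inverse(3)[OF assms(3)])
  then have "?L (?Rw x - ?Rz x) = cscale J (w - z) (?Rz x)"
    by (simp add: L.diff resolvent_inverse(3)[OF assms(4)])
  also have "\<dots> = ?L (cscale J (w - z) (?Rw (?Rz x)))"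
    by (simp add: shift_op_cscale[OF assms(1,2)] resolvent_inverse(3)[OF assms(4)])
  finally show ?thesis
    by (metis resolvent_inverse(2)[OF assms(4)])
qed

lemma res_norm_le_perturb:
  assumes "cbounded J T" "complex_structure J" "z \<notin> spec J T" "w \<notin> spec J T"
  shows "res_norm J T w \<le> res_norm J T z + cmod (w - z) * res_norm J T w * res_norm J T z"
proof -
  let ?R = "resolvent J T" and ?r = "res_norm J T"
  have "norm (?R w x) \<le> (?r z + cmod (w - z) * ?r w * ?r z) * norm x" for x
  proof -
    have "?R w x = ?R z x + cscale J (w - z) (?R w (?R z x))"
      using resolvent_identity[OF assms, of x] by (simp add: algebra_simps)
    then have "norm (?R w x) \<le> norm (?R z x) + cmod (w - z) * norm (?R w (?R z x))"
      by (metis norm_triangle_ineq norm_cscale[OF assms(2)])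
    also have "\<dots> \<le> ?r z * norm x + cmod (w - z) * (?r w * ?r z * norm x)"
      by (intro add_mono mult_left_mono norm_resolvent_le[OF assms(3)]
          norm_resolvent_resolvent_le[OF assms(3,4)]) auto
    finally show ?thesis by (simp add: algebra_simps)
  qed
  moreover have "0 \<le> ?r z + cmod (w - z) * ?r w * ?r z"
    using res_norm_nonneg[OF assms(3)] res_norm_nonneg[OF assms(4)] by simp
  ultimately show ?thesis
    unfolding res_norm_eq_onorm_resolvent[of J T w] by (intro onorm_bound) auto
qed

text \<open>The perturbation bound and its symmetric version squeeze \<parallel>R(w)\<parallel> between
\<parallel>R(z)\<parallel> / (1 + |w - z| \<parallel>R(z)\<parallel>) and \<parallel>R(z)\<parallel> / (1 - |w - z| \<parallel>R(z)\<parallel>).\<close>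

lemma continuous_on_res_norm:
  assumes "cbounded J T" "complex_structure J"
  shows "continuous_on (- spec J T) (res_norm J T)"
  unfolding continuous_on_def
proof
  fix z assume "z \<in> - spec J T"
  then have z: "z \<notin> spec J T" by simp
  let ?r = "res_norm J T" and ?F = "at z within - spec J T"
  let ?d = "\<lambda>w. cmod (w - z) * ?r z"
  have d: "(?d \<longlongrightarrow> 0) ?F"
    by (auto intro!: tendsto_eq_intros)
  have in_domain: "eventually (\<lambda>w. w \<notin> spec J T) ?F"
    by (simp add: eventually_at_filter)
  have "eventually (\<lambda>w. ?r z / (1 + ?d w) \<le> ?r w) ?F"
    using in_domain
  proof eventually_elim
    case (elim w)
    have "?r z \<le> ?r w * (1 + ?d w)"
      using res_norm_le_perturb[OF assms elim, of z] z by (simp add: norm_minus_commute algebra_simps)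
    moreover have "0 < 1 + ?d w"
      using res_norm_nonneg[OF z] by (intro add_pos_nonneg mult_nonneg_nonneg) auto
    ultimately show ?case
      by (simp add: pos_divide_le_eq)
  qed
  moreover have "eventually (\<lambda>w. ?r w \<le> ?r z / (1 - ?d w)) ?F"
    using in_domain order_tendstoD(2)[OF d zero_less_one]
  proof eventually_elim
    case (elim w)
    have "?r w * (1 - ?d w) \<le> ?r z"
      using res_norm_le_perturb[OF assms _ elim(1), of z] z by (simp add: algebra_simps)
    then show ?case
      using elim(2) by (simp add: pos_le_divide_eq)
  qed
  moreover have "((\<lambda>w. ?r z / (1 + ?d w)) \<longlongrightarrow> ?r z) ?F"
    using tendsto_divide[OF tendsto_const[of "?r z"] tendsto_add[OF tendsto_const[of 1] d]] by simp
  moreover have "((\<lambda>w. ?r z / (1 - ?d w)) \<longlongrightarrow> ?r z) ?F"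
    using tendsto_divide[OF tendsto_const[of "?r z"] tendsto_diff[OF tendsto_const[of 1] d]] by simp
  ultimately show "(?r \<longlongrightarrow> ?r z) ?F"
    by (rule tendsto_sandwich)
qed

lemma resolvent_second_difference:
  assumes "cbounded J T" "complex_structure J"
    and "\<mu> \<notin> spec J T" "\<mu> + \<eta> \<notin> spec J T" "\<mu> - \<eta> \<notin> spec J T"
  shows "resolvent J T (\<mu> + \<eta>) x + resolvent J T (\<mu> - \<eta>) x - 2 *\<^sub>R resolvent J T \<mu> x
       = cscale J (2 * \<eta>\<^sup>2) (resolvent J T (\<mu> + \<eta>) (resolvent J T (\<mu> - \<eta>) (resolvent J T \<mu> x)))"
proof -
  let ?R = "resolvent J T"
  let ?y = "?R \<mu> x"
  have "?R (\<mu> + \<eta>) x + ?R (\<mu> - \<eta>) x - 2 *\<^sub>R ?y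
      = (?R (\<mu> + \<eta>) x - ?y) + (?R (\<mu> - \<eta>) x - ?y)"
    by (simp add: scaleR_2)
  also have "\<dots> = cscale J \<eta> (?R (\<mu> + \<eta>) ?y) - cscale J \<eta> (?R (\<mu> - \<eta>) ?y)"
    using resolvent_identity[OF assms(1,2,3,4), of x] resolvent_identity[OF assms(1,2,3,5), of x]
    by (simp add: cscale_minus_left)
  also have "\<dots> = cscale J \<eta> (cscale J (2 * \<eta>) (?R (\<mu> + \<eta>) (?R (\<mu> - \<eta>) ?y)))"
    using resolvent_identity[OF assms(1,2,5,4), of ?y]
    by (simp add: cscale_diff_right[OF complex_structureD(1)[OF assms(2)], symmetric])
  finally show ?thesis
    by (simp add: cscale_cscale[OF assms(2)] power2_eq_square mult.left_commute)
qed

lemma res_norm_second_difference_le: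
  assumes "cbounded J T" "complex_structure J"
    and "\<mu> \<notin> spec J T" "\<mu> + \<eta> \<notin> spec J T" "\<mu> - \<eta> \<notin> spec J T"
  shows "2 * res_norm J T \<mu> - res_norm J T (\<mu> + \<eta>) - res_norm J T (\<mu> - \<eta>)
       \<le> 2 * (cmod \<eta>)\<^sup>2 * (res_norm J T (\<mu> + \<eta>) * res_norm J T (\<mu> - \<eta>) * res_norm J T \<mu>)"
proof -
  let ?R = "resolvent J T" and ?r = "res_norm J T"
  let ?bound = "?r (\<mu> + \<eta>) + ?r (\<mu> - \<eta>) + 2 * (cmod \<eta>)\<^sup>2 * (?r (\<mu> + \<eta>) * ?r (\<mu> - \<eta>) * ?r \<mu>)"
  have "norm (2 *\<^sub>R ?R \<mu> x) \<le> ?bound * norm x" for x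
  proof -
    let ?P = "?R (\<mu> + \<eta>) (?R (\<mu> - \<eta>) (?R \<mu> x))"
    let ?A = "?R (\<mu> + \<eta>) x" and ?B = "?R (\<mu> - \<eta>) x"
    have "2 *\<^sub>R ?R \<mu> x = ?A + ?B - cscale J (2 * \<eta>\<^sup>2) ?P"
      using resolvent_second_difference[OF assms, of x] by (simp add: algebra_simps)
    then have "norm (2 *\<^sub>R ?R \<mu> x) \<le> norm (?A + ?B) + norm (cscale J (2 * \<eta>\<^sup>2) ?P)"
      by (simp only: norm_triangle_ineq4)
    also have "norm (cscale J (2 * \<eta>\<^sup>2) ?P) = 2 * (cmod \<eta>)\<^sup>2 * norm ?P"
      by (simp add: norm_cscale[OF assms(2)] norm_mult norm_power)
    finally have triangle: "norm (2 *\<^sub>R ?R \<mu> x) \<le> norm (?A + ?B) + 2 * (cmod \<eta>)\<^sup>2 * norm ?P" .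
    have "norm ?P \<le> ?r (\<mu> + \<eta>) * ?r (\<mu> - \<eta>) * (?r \<mu> * norm x)"
      using res_norm_nonneg[OF assms(4)] res_norm_nonneg[OF assms(5)]
      by (intro order_trans[OF norm_resolvent_resolvent_le[OF assms(5,4)]] mult_left_mono
          norm_resolvent_le[OF assms(3)]) auto
    then have "2 * (cmod \<eta>)\<^sup>2 * norm ?P
        \<le> 2 * (cmod \<eta>)\<^sup>2 * (?r (\<mu> + \<eta>) * ?r (\<mu> - \<eta>) * (?r \<mu> * norm x))"
      by (rule mult_left_mono) simp
    with triangle norm_triangle_ineq[of ?A ?B]
      norm_resolvent_le[OF assms(4), of x] norm_resolvent_le[OF assms(5), of x]
    show ?thesis by (simp add: algebra_simps)
  qed
  moreover have "0 \<le> ?bound"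
    using res_norm_nonneg[OF assms(3)] res_norm_nonneg[OF assms(4)] res_norm_nonneg[OF assms(5)]
    by simp
  ultimately have "onorm (\<lambda>x. 2 *\<^sub>R ?R \<mu> x) \<le> ?bound"
    by (intro onorm_bound) auto
  moreover have "onorm (\<lambda>x. 2 *\<^sub>R ?R \<mu> x) = 2 * ?r \<mu>"
    using onorm_scaleR[OF bounded_linear_resolvent[OF assms(3)], of 2]
    by (simp add: res_norm_eq_onorm_resolvent)
  ultimately show ?thesis by simp
qed

lemma mult3_le_of_cubes_le:
  fixes a b c M :: real
  assumes "0 \<le> a" "0 \<le> b" "0 \<le> c" "a ^ 3 \<le> M" "b ^ 3 \<le> M" "c ^ 3 \<le> M"
  shows "a * b * c \<le> M"
proof -
  define k where "k = max a (max b c)"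
  have "a * b * c \<le> k * k * k"
    unfolding k_def using assms(1-3) by (intro mult_mono) auto
  also have "\<dots> \<le> M"
    using assms(4-6) by (simp add: k_def max_def power3_eq_cube)
  finally show ?thesis .
qed

lemma res_norm_cube_le_Sup:
  assumes "cbounded J T" "complex_structure J"
    and "compact B" "B \<subseteq> - spec J T" "p \<in> B"
  shows "2 * res_norm J T p ^ 3 \<le> Sup ((\<lambda>z. 2 * res_norm J T z ^ 3) ` B)"
proof -
  have "continuous_on B (\<lambda>z. 2 * res_norm J T z ^ 3)"
    using continuous_on_subset[OF continuous_on_res_norm[OF assms(1,2)] assms(4)]
    by (intro continuous_intros)
  then have "bdd_above ((\<lambda>z. 2 * res_norm J T z ^ 3) ` B)"
    using assms(3) by (intro bounded_imp_bdd_above compact_imp_bounded compact_continuous_image)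
  then show ?thesis
    using assms(5) by (intro cSup_upper) auto
qed

theorem theorem2p9:
  fixes J T :: "'a::{real_inner, complete_space} \<Rightarrow> 'a"
  assumes "complex_structure J"
    and "cbounded J T"
  shows "semiconvex_bound (- spec J T) (res_norm J T) (\<lambda>z. 2 * inverse (Psi J T z ^ 3))"
proof -
  let ?r = "res_norm J T"
  have C_eq: "(\<lambda>z. 2 * inverse (Psi J T z ^ 3)) = (\<lambda>z. 2 * ?r z ^ 3)"
    by (simp add: Psi_def power_inverse)
  have "semiconvex_const B ?r (Sup ((\<lambda>z. 2 * ?r z ^ 3) ` B))"
    if B: "compact B" "convex B" "B \<subseteq> - spec J T" for B
    unfolding semiconvex_const_def
  proof (intro allI impI)
    fix \<mu> \<eta> assume seg: "closed_segment (\<mu> - \<eta>) (\<mu> + \<eta>) \<subseteq> B"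
    let ?M = "Sup ((\<lambda>z. 2 * ?r z ^ 3) ` B)"
    have "midpoint (\<mu> - \<eta>) (\<mu> + \<eta>) = \<mu>"
      by (simp add: midpoint_def scaleR_2[symmetric])
    then have in_B: "\<mu> \<in> B" "\<mu> + \<eta> \<in> B" "\<mu> - \<eta> \<in> B"
      using seg midpoint_in_closed_segment[of "\<mu> - \<eta>" "\<mu> + \<eta>"] by auto
    note cube_le = res_norm_cube_le_Sup[OF assms(2,1) B(1,3)]
    let ?P = "?r (\<mu> + \<eta>) * ?r (\<mu> - \<eta>) * ?r \<mu>"
    have "?P \<le> ?M / 2"
      using in_B B(3) cube_le[of "\<mu> + \<eta>"] cube_le[of "\<mu> - \<eta>"] cube_le[of \<mu>]
      by (intro mult3_le_of_cubes_le) (auto intro: res_norm_nonneg)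
    then have "(cmod \<eta>)\<^sup>2 * (2 * ?P) \<le> (cmod \<eta>)\<^sup>2 * ?M"
      by (intro mult_left_mono) auto
    moreover have "2 * ?r \<mu> - ?r (\<mu> + \<eta>) - ?r (\<mu> - \<eta>) \<le> 2 * (cmod \<eta>)\<^sup>2 * ?P"
      using in_B B(3) by (intro res_norm_second_difference_le assms) auto
    ultimately show "2 * ?r \<mu> - ?r (\<mu> + \<eta>) - ?r (\<mu> - \<eta>) \<le> ?M * (cmod \<eta>)\<^sup>2"
      by (simp add: mult.commute mult.left_commute)
  qed
  then show ?thesis
    unfolding semiconvex_bound_def C_eq
    using continuous_on_res_norm[OF assms(2,1)] by blast
qed

end
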